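(* Assume (A1). Then every connected component of $\mathcal{C}=\{x\in\mathcal{E}:\|h(x)\|\le R\}$ contains a point $\bar z$ with $h(\bar z)=0$.
   Context: $\mathcal{E}$ is a Euclidean space, $h\colon\mathcal{E}\to\mathbb{R}^m$ is $C^\infty$, $\|\cdot\|$ is the 2-norm on $\mathbb{R}^m$, and $\sigma_{\min}(\mathrm{D}h(x))$ denotes the $m$-th singular value of the differential $\mathrm{D}h(x)\colon\mathcal{E}\to\mathbb{R}^m$. (A1): there exist constants $R,\underline{\sigma}>0$ such that $\sigma_{\min}(\mathrm{D}h(x))\ge\underline{\sigma}$ for all $x\in\mathcal{C}=\{x:\|h(x)\|\le R\}$. *)

theory Defs
  imports "HOL-Analysis.Analysis"
begin

inductive_set iter_dir_derivs :: "('a::real_normed_vector \<Rightarrow> 'b::real_normed_vector) \<Rightarrow> ('a \<Rightarrow> 'b) set"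
  for f where
  base: "f \<in> iter_dir_derivs f"
| step: "g \<in> iter_dir_derivs f \<Longrightarrow> (\<forall>x. g differentiable (at x))
          \<Longrightarrow> (\<lambda>x. frechet_derivative g (at x) v) \<in> iter_dir_derivs f"

definition smooth :: "('a::real_normed_vector \<Rightarrow> 'b::real_normed_vector) \<Rightarrow> bool" where
  "smooth f \<longleftrightarrow> (\<forall>g \<in> iter_dir_derivs f. \<forall>x. g differentiable (at x))"

text \<open>k-th singular value of a linear map (Courant--Fischer): maximum over k-dimensional
  subspaces V of the minimum of norm (L x) over unit vectors x in V; 0 if there is no such subspace.\<close>
definition singular_value :: "nat \<Rightarrow> ('a::euclidean_space \<Rightarrow> 'b::real_inner) \<Rightarrow> real" where
  "singular_value k L =
     (if \<exists>V::'a set. subspace V \<and> dim V = k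
      then Sup {Inf {norm (L x) | x. x \<in> V \<and> norm x = 1} | V. subspace V \<and> dim V = k}
      else 0)"

end

(* Fix x0 in C and let K be its connected component, a closed set. Minimise
   psi y = |h y| + (sigma/4) |y - x0| over the compact set K \<inter> cball x0 rho, with rho so
   large that the minimiser z lies in the open ball. If h z \<noteq> 0, (A1) yields a Newton
   direction v with Dh(z) v = - h z and |v| \<le> 2 |h z| / sigma. Along a short segment from
   z in direction v, |h| decreases, so the segment stays in C and hence in K, and it
   decreases faster than the penalty term grows: this contradicts the minimality of z. *)

theory Submission
  imports Defs
begin

lemma smooth_imp_differentiable:
  assumes "smooth f"
  shows "f differentiable (at x)"
  using assms iter_dir_derivs.base[of f] unfolding smooth_def by blast

lemma Inf_norm_on_unit_vectors_mult_le:
  fixes L :: "'a::real_normed_vector \<Rightarrow> 'b::real_normed_vector"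
  assumes lin: "linear L" and V: "subspace V" and x: "x \<in> V"
  shows "Inf {norm (L u) | u. u \<in> V \<and> norm u = 1} * norm x \<le> norm (L x)"
proof (cases "x = 0")
  case True
  then show ?thesis
    using lin by (simp add: linear_0)
next
  case False
  have "Inf {norm (L u) | u. u \<in> V \<and> norm u = 1} \<le> norm (L (x /\<^sub>R norm x))"
    using x False V by (intro cInf_lower) (auto intro: bdd_belowI[of _ 0] simp: subspace_scale)
  also have "\<dots> = norm (L x) / norm x"
    using lin by (simp add: linear_scale divide_inverse_commute)
  finally show ?thesis
    using False by (simp add: pos_le_divide_eq)
qed

lemma singular_value_lower_bound_on_subspace:
  fixes L :: "'a::euclidean_space \<Rightarrow> 'b::real_inner"
  assumes lin: "linear L" and c: "0 \<le> c" "c < singular_value k L"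
  obtains V where "subspace V" "dim V = k" "\<forall>x\<in>V. c * norm x \<le> norm (L x)"
proof (cases "k = 0")
  case True
  then show ?thesis
    using that[of "{0}"] lin by (simp add: linear_0)
next
  case False
  define m where "m V = Inf {norm (L x) | x. x \<in> V \<and> norm x = 1}" for V
  define T where "T = m ` {V. subspace V \<and> dim V = k}"
  have ex: "\<exists>V::'a set. subspace V \<and> dim V = k"
  proof (rule ccontr)
    assume "\<not> ?thesis"
    then have "singular_value k L = 0"
      unfolding singular_value_def by auto
    then show False
      using c by linarith
  qed
  then have sv: "singular_value k L = Sup T"
    unfolding singular_value_def T_def m_def by (simp add: setcompr_eq_image)
  have m_le: "m V * norm x \<le> norm (L x)" if "subspace V" "x \<in> V" for V x
    unfolding m_def using lin that by (rule Inf_norm_on_unit_vectors_mult_le)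
  obtain B where B: "\<And>x. norm (L x) \<le> norm x * B"
    using lin linear_conv_bounded_linear bounded_linear.bounded by blast
  have "m V \<le> B" if V: "subspace V" "dim V = k" for V
  proof -
    obtain y where "y \<in> V" "y \<noteq> 0"
      using V(2) False dim_eq_0[of V] by auto
    then have "m V \<le> norm (L (y /\<^sub>R norm y))"
      using m_le[of V "y /\<^sub>R norm y"] V(1) by (simp add: subspace_scale)
    also have "\<dots> \<le> B"
      using B[of "y /\<^sub>R norm y"] \<open>y \<noteq> 0\<close> by simp
    finally show ?thesis .
  qed
  then have "bdd_above T"
    unfolding T_def by (auto intro: bdd_aboveI[of _ B])
  moreover have "T \<noteq> {}"
    using ex unfolding T_def by blast
  moreover have "c < Sup T"
    using c sv by simp
  ultimately obtain t where "t \<in> T" "c < t"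
    using less_cSup_iff by blast
  then obtain V where V: "subspace V" "dim V = k" and cm: "c < m V"
    unfolding T_def by blast
  have "c * norm x \<le> norm (L x)" if "x \<in> V" for x
    using m_le[OF V(1) that] mult_right_mono[of c "m V" "norm x"] cm by simp
  then show ?thesis
    using that V by blast
qed

lemma linear_image_subspace_eq_UNIV:
  fixes L :: "'a::euclidean_space \<Rightarrow> 'b::euclidean_space"
  assumes lin: "linear L" and V: "subspace V" and inj: "inj_on L V" and dV: "dim V = DIM('b)"
  shows "L ` V = UNIV"
proof -
  have "dim (L ` V) = DIM('b)"
    using dim_image_eq[OF lin, of V] inj V dV by (simp add: span_eq_iff[THEN iffD2, OF V])
  then have "span (L ` V) = UNIV"
    using dim_eq_full by blast
  then show ?thesis
    using V lin by (metis linear_subspace_image span_eq_iff)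
qed

lemma preimage_norm_bound_of_singular_value:
  fixes L :: "'a::euclidean_space \<Rightarrow> 'b::euclidean_space"
  assumes lin: "linear L" and c: "0 < c" "c < singular_value DIM('b) L"
  obtains x where "L x = y" "c * norm x \<le> norm y"
proof -
  obtain V where V: "subspace V" "dim V = DIM('b)"
    and bound: "\<forall>x\<in>V. c * norm x \<le> norm (L x)"
    using singular_value_lower_bound_on_subspace[OF lin] c by (metis less_imp_le)
  have "inj_on L V"
  proof (rule inj_onI)
    fix a b assume "a \<in> V" "b \<in> V" "L a = L b"
    then have "c * norm (a - b) \<le> norm (L (a - b))"
      using bound V(1) by (simp add: subspace_diff)
    also have "L (a - b) = 0"
      using \<open>L a = L b\<close> lin by (simp add: linear_diff)
    finally show "a = b"
      using c by (simp add: mult_le_0_iff)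
  qed
  then obtain x where "x \<in> V" "L x = y"
    using linear_image_subspace_eq_UNIV[OF lin V(1) _ V(2)] by (metis UNIV_I imageE)
  then show ?thesis
    using that bound by blast
qed

lemma newton_step_estimate:
  fixes h :: "'a::real_normed_vector \<Rightarrow> 'b::real_normed_vector"
  assumes der: "(h has_derivative L) (at z)" and Lv: "L v = - h z" and \<epsilon>: "\<epsilon> > 0"
  obtains \<delta> where "\<delta> > 0"
    "\<And>t. 0 \<le> t \<Longrightarrow> t \<le> \<delta> \<Longrightarrow> norm (h (z + t *\<^sub>R v)) \<le> (1 - t) * norm (h z) + t * \<epsilon>"
proof -
  have lin: "linear L"
    using der has_derivative_linear by blast
  have nv: "0 < norm v + 1"
    by (simp add: add_nonneg_pos)
  define e where "e = \<epsilon> / (norm v + 1)"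
  have e: "e > 0" "e * norm v \<le> \<epsilon>"
    using \<epsilon> nv unfolding e_def by (simp_all add: field_simps)
  obtain d where d: "d > 0" and approx: "\<And>y. norm (y - z) < d \<Longrightarrow>
      norm (h y - h z - L (y - z)) \<le> e * norm (y - z)"
    using der e(1) unfolding has_derivative_at_alt by blast
  define \<delta> where "\<delta> = min 1 (d / (norm v + 1))"
  have "norm (h (z + t *\<^sub>R v)) \<le> (1 - t) * norm (h z) + t * \<epsilon>" if t: "0 \<le> t" "t \<le> \<delta>" for t
  proof -
    have "t * norm v \<le> d / (norm v + 1) * norm v"
      using t by (intro mult_right_mono) (auto simp: \<delta>_def)
    also have "\<dots> < d"
      using d nv by (simp add: field_simps)
    finally have "norm (h (z + t *\<^sub>R v) - h z - L (t *\<^sub>R v)) \<le> t * (e * norm v)"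
      using approx[of "z + t *\<^sub>R v"] t by (simp add: mult.left_commute)
    also have "\<dots> \<le> t * \<epsilon>"
      using t e(2) by (simp add: mult_left_mono)
    also have "h (z + t *\<^sub>R v) - h z - L (t *\<^sub>R v) = h (z + t *\<^sub>R v) - (1 - t) *\<^sub>R h z"
      using lin Lv by (simp add: linear_scale algebra_simps)
    finally have "norm (h (z + t *\<^sub>R v) - (1 - t) *\<^sub>R h z) \<le> t * \<epsilon>" .
    moreover have "norm ((1 - t) *\<^sub>R h z) = (1 - t) * norm (h z)"
      using t by (simp add: \<delta>_def)
    ultimately show ?thesis
      using norm_triangle_sub[of "h (z + t *\<^sub>R v)" "(1 - t) *\<^sub>R h z"] by linarith
  qed
  moreover have "\<delta> > 0"
    using d nv by (simp add: \<delta>_def)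
  ultimately show ?thesis
    using that by blast
qed

lemma segment_in_sublevel_component:
  fixes g :: "'a::real_normed_vector \<Rightarrow> real"
  assumes z: "z \<in> connected_component_set {x. g x \<le> R} x0" and s: "0 \<le> s"
    and below: "\<And>t. 0 \<le> t \<Longrightarrow> t \<le> s \<Longrightarrow> g (z + t *\<^sub>R v) \<le> g z"
  shows "z + s *\<^sub>R v \<in> connected_component_set {x. g x \<le> R} x0"
proof -
  define seg where "seg = (\<lambda>t. z + t *\<^sub>R v) ` {0..s}"
  have "g z \<le> R"
    using z connected_component_subset by fastforce
  then have "seg \<subseteq> {x. g x \<le> R}"
    using below unfolding seg_def by force
  moreover have "connected seg"
    unfolding seg_def by (intro connected_continuous_image connected_Icc continuous_intros)
  moreover have "z \<in> seg"
    using s unfolding seg_def by (auto intro!: image_eqI[of _ _ 0])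
  ultimately have "seg \<subseteq> connected_component_set {x. g x \<le> R} x0"
    using z connected_component_maximal connected_component_eq by metis
  then show ?thesis
    using s by (auto simp: seg_def image_subset_iff)
qed

lemma newton_descent_in_sublevel_component:
  fixes h :: "'a::real_normed_vector \<Rightarrow> 'b::real_normed_vector" and R :: real and x0 :: 'a
  defines "K \<equiv> connected_component_set {x. norm (h x) \<le> R} x0"
  assumes der: "(h has_derivative L) (at z)" and Lv: "L v = - h z"
    and v_bound: "2 * c * norm v \<le> norm (h z)"
    and z: "z \<in> K" and hz: "h z \<noteq> 0" and \<delta>: "\<delta> > 0"
  shows "\<exists>y\<in>K. dist y z < \<delta> \<and> norm (h y) + c * dist y z < norm (h z)"
proof -
  define p where "p = norm (h z)"
  have p: "p > 0"
    using hz p_def by simp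
  then have "p / 4 > 0"
    by simp
  then obtain \<delta>' where \<delta>': "\<delta>' > 0" and step: "\<And>t. 0 \<le> t \<Longrightarrow> t \<le> \<delta>' \<Longrightarrow>
      norm (h (z + t *\<^sub>R v)) \<le> (1 - t) * p + t * (p / 4)"
    using newton_step_estimate[OF der Lv] unfolding p_def by blast
  have nv: "0 < norm v + 1"
    by (simp add: add_nonneg_pos)
  define s where "s = min \<delta>' (\<delta> / (norm v + 1))"
  have s: "s > 0" "s \<le> \<delta>'"
    using \<delta> \<delta>' nv by (simp_all add: s_def)
  have "s * norm v \<le> \<delta> / (norm v + 1) * norm v"
    by (intro mult_right_mono) (auto simp: s_def)
  also have "\<dots> < \<delta>"
    using \<delta> nv by (simp add: field_simps)
  finally have dist_y: "dist (z + s *\<^sub>R v) z < \<delta>"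
    using s by (simp add: dist_norm)
  have decrease: "norm (h (z + t *\<^sub>R v)) \<le> p - 3 / 4 * (t * p)" if "0 \<le> t" "t \<le> s" for t
    using step[of t] that s by (simp add: algebra_simps)
  have "norm (h (z + t *\<^sub>R v)) \<le> p" if "0 \<le> t" "t \<le> s" for t
    using decrease[OF that] mult_nonneg_nonneg[of t p] that p by linarith
  then have "z + s *\<^sub>R v \<in> K"
    using z s unfolding K_def p_def by (intro segment_in_sublevel_component) auto
  moreover have "norm (h (z + s *\<^sub>R v)) + c * dist (z + s *\<^sub>R v) z < p"
  proof -
    have "c * dist (z + s *\<^sub>R v) z = s / 2 * (2 * c * norm v)"
      using s by (simp add: dist_norm)
    also have "\<dots> \<le> s / 2 * p"
      using v_bound s p_def by (simp add: mult_left_mono)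
    finally have "c * dist (z + s *\<^sub>R v) z \<le> (s * p) / 2"
      by simp
    then show ?thesis
      using decrease[of s] mult_pos_pos[of s p] s p by linarith
  qed
  ultimately show ?thesis
    using dist_y p_def by blast
qed

lemma exists_zero_of_strict_descent:
  fixes f :: "'a::heine_borel \<Rightarrow> real"
  assumes K: "closed K" and f: "continuous_on K f" "\<And>x. x \<in> K \<Longrightarrow> f x \<ge> 0"
    and c: "c > 0" and x0: "x0 \<in> K"
    and descent: "\<And>z \<delta>. z \<in> K \<Longrightarrow> f z > 0 \<Longrightarrow> \<delta> > 0 \<Longrightarrow>
                    \<exists>y\<in>K. dist y z < \<delta> \<and> f y + c * dist y z < f z"
  shows "\<exists>z\<in>K. f z = 0"
proof -
  define \<rho> where "\<rho> = f x0 / c + 1"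
  define S where "S = cball x0 \<rho> \<inter> K"
  define \<psi> where "\<psi> y = f y + c * dist y x0" for y
  have x0_S: "x0 \<in> S"
    using x0 f(2)[OF x0] c by (simp add: S_def \<rho>_def)
  have "compact S"
    unfolding S_def using K by (simp add: compact_Int_closed)
  moreover have "continuous_on S \<psi>"
    unfolding \<psi>_def S_def by (intro continuous_intros continuous_on_subset[OF f(1)]) auto
  ultimately have "\<exists>z\<in>S. \<forall>y\<in>S. \<psi> z \<le> \<psi> y"
    using x0_S by (intro continuous_attains_inf) auto
  then obtain z where zS: "z \<in> S" and z_min: "\<And>y. y \<in> S \<Longrightarrow> \<psi> z \<le> \<psi> y"
    by blast
  have zK: "z \<in> K"
    using zS by (simp add: S_def)
  have "f z + c * dist z x0 \<le> f x0"
    using z_min[OF x0_S] by (simp add: \<psi>_def)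
  then have "c * dist z x0 \<le> f x0"
    using f(2)[OF zK] by linarith
  then have z_inner: "dist z x0 < \<rho>"
    using c by (simp add: \<rho>_def field_simps)
  show ?thesis
  proof (rule ccontr)
    assume "\<not> ?thesis"
    then have "f z > 0"
      using zK f(2)[OF zK] by (simp add: less_eq_real_def)
    then obtain y where yK: "y \<in> K" and y_near: "dist y z < \<rho> - dist z x0"
      and y_desc: "f y + c * dist y z < f z"
      using descent[OF zK, of "\<rho> - dist z x0"] z_inner by auto
    have triangle: "dist y x0 \<le> dist y z + dist z x0"
      by (rule dist_triangle)
    then have "y \<in> S"
      using yK y_near by (simp add: S_def dist_commute)
    moreover have "c * dist y x0 \<le> c * dist y z + c * dist z x0"
      using triangle c by (simp add: distrib_left[symmetric])
    then have "\<psi> y < \<psi> z"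
      using y_desc by (simp add: \<psi>_def)
    ultimately show False
      using z_min by (meson not_le)
  qed
qed

theorem mainTheorem6:
  fixes h :: "'a::euclidean_space \<Rightarrow> real ^ 'm"
    and R \<sigma> :: real
  assumes smooth_h: "smooth h"
    and R_pos: "R > 0" and \<sigma>_pos: "\<sigma> > 0"
    and A1: "\<forall>x \<in> {x. norm (h x) \<le> R}.
               singular_value CARD('m) (frechet_derivative h (at x)) \<ge> \<sigma>"
  shows "\<forall>x \<in> {x. norm (h x) \<le> R}.
           \<exists>z \<in> connected_component_set {x. norm (h x) \<le> R} x. h z = 0"
proof
  fix x0 assume x0: "x0 \<in> {x. norm (h x) \<le> R}"
  define K where "K = connected_component_set {x. norm (h x) \<le> R} x0"
  have der: "\<And>x. (h has_derivative frechet_derivative h (at x)) (at x)"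
    using smooth_imp_differentiable[OF smooth_h] frechet_derivative_works by blast
  have cont: "continuous_on UNIV h"
    using der has_derivative_continuous continuous_at_imp_continuous_on by blast
  have closed_K: "closed K"
    unfolding K_def using cont
    by (intro closed_connected_component closed_Collect_le continuous_intros) auto
  have cont_K: "continuous_on K (\<lambda>x. norm (h x))"
    using cont by (auto intro: continuous_on_norm continuous_on_subset)
  have descent: "\<exists>y\<in>K. dist y z < \<delta> \<and> norm (h y) + \<sigma> / 4 * dist y z < norm (h z)"
    if z: "z \<in> K" and hz: "norm (h z) > 0" and \<delta>: "\<delta> > 0" for z \<delta>
  proof -
    let ?L = "frechet_derivative h (at z)"
    have "z \<in> {x. norm (h x) \<le> R}"
      using z connected_component_subset unfolding K_def by blast
    \<comment> \<open>The supremum defining \<open>singular_value\<close> need not be attained, hence the slack \<open>\<sigma> / 2\<close>.\<close>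
    then have "\<sigma> / 2 < singular_value DIM(real ^ 'm) ?L"
      using A1 \<sigma>_pos by fastforce
    moreover have "0 < \<sigma> / 2"
      using \<sigma>_pos by simp
    ultimately obtain v where "?L v = - h z" "\<sigma> / 2 * norm v \<le> norm (- h z)"
      using preimage_norm_bound_of_singular_value[OF has_derivative_linear[OF der]] by blast
    then show ?thesis
      using newton_descent_in_sublevel_component[OF der, where c = "\<sigma> / 4"] z hz \<delta>
      unfolding K_def by simp
  qed
  have "x0 \<in> K"
    using x0 unfolding K_def by simp
  then have "\<exists>z\<in>K. norm (h z) = 0"
    using exists_zero_of_strict_descent[OF closed_K cont_K _ _ _ descent] \<sigma>_pos by simp
  then show "\<exists>z \<in> connected_component_set {x. norm (h x) \<le> R} x0. h z = 0"
    unfolding K_def by simp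
qed

end
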